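(* Let $V$ be the simple branching: the quotient of the disjoint union $R_1\sqcup R_2$ of two copies of $\mathbb{R}$ by the equivalence relation identifying the point of coordinate $t$ in $R_1$ with the point of coordinate $t$ in $R_2$ whenever $t<0$ (and identifying nothing else). Then $V$ admits two $C^\infty$-differentiable structures that are not isomorphic, i.e. there is no homeomorphism from $V$ with the first structure to $V$ with the second structure which is $C^\infty$ and has a $C^\infty$ inverse.
   Context: A topological manifold need not be Hausdorff. A $C^r$-differentiable structure ($r$ a positive integer or $\infty$) on an $n$-dimensional manifold $V$ is given by an atlas of charts $h_i:\mathbb{R}^n\to V$ (homeomorphisms onto open subsets covering $V$) such that every transition map $h_j^{-1}h_i$, from $h_i^{-1}(U_i\cap U_j)$ to $h_j^{-1}(U_i\cap U_j)$, is a $C^r$ homeomorphism between open subsets of $\mathbb{R}^n$; two atlases define the same structure if their union is still such an atlas. A map between $C^r$ manifolds is $C^r$ if it is $C^r$ when read in charts. *)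

theory Defs
  imports "HOL-Analysis.Analysis"
begin

definition quotient_topology :: "'a topology \<Rightarrow> ('a \<Rightarrow> 'b) \<Rightarrow> 'b topology" where
  "quotient_topology X q =
     topology (\<lambda>U. U \<subseteq> q ` topspace X \<and> openin X {x \<in> topspace X. q x \<in> U})"

(* Disjoint union R_1 \<sqcup> R_2 of two copies of the real line: R_1 = {True} \<times> UNIV, R_2 = {False} \<times> UNIV *)
definition two_lines :: "(bool \<times> real) topology" where
  "two_lines = sum_topology (\<lambda>_. euclideanreal) UNIV"

definition branch_rel :: "bool \<times> real \<Rightarrow> bool \<times> real \<Rightarrow> bool" where
  "branch_rel p q \<longleftrightarrow> snd p = snd q \<and> (fst p = fst q \<or> snd p < 0)"

definition branch_class :: "bool \<times> real \<Rightarrow> (bool \<times> real) set" where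
  "branch_class p = {q. branch_rel p q}"

definition simple_branching :: "(bool \<times> real) set topology" where
  "simple_branching = quotient_topology two_lines branch_class"

definition smooth_on :: "real set \<Rightarrow> (real \<Rightarrow> real) \<Rightarrow> bool" where
  "smooth_on S f \<longleftrightarrow> (\<forall>k. \<forall>x\<in>S. ((deriv ^^ k) f) field_differentiable (at x))"

definition smooth_atlas :: "'a topology \<Rightarrow> (real \<Rightarrow> 'a) set \<Rightarrow> bool" where
  "smooth_atlas V A \<longleftrightarrow>
     (\<forall>h\<in>A. openin V (range h) \<and> homeomorphic_map euclideanreal (subtopology V (range h)) h) \<and>
     (\<Union>h\<in>A. range h) = topspace V \<and>
     (\<forall>h\<in>A. \<forall>k\<in>A. smooth_on (h -` range k) (\<lambda>x. inv k (h x)))"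

definition smooth_map_atlas :: "(real \<Rightarrow> 'a) set \<Rightarrow> (real \<Rightarrow> 'b) set \<Rightarrow> ('a \<Rightarrow> 'b) \<Rightarrow> bool" where
  "smooth_map_atlas A B f \<longleftrightarrow>
     (\<forall>h\<in>A. \<forall>k\<in>B. smooth_on (h -` (f -` range k)) (\<lambda>x. inv k (f (h x))))"

end

theory Submission
  imports Defs
begin

(* The two origins 0_1 and 0_2 of V are the only pair of distinct points without disjoint
   neighbourhoods, so every homeomorphism of V fixes or swaps them. The first structure is given
   by the two branch charts t \<mapsto> (i, t); the second replaces the chart of the second branch by
   s \<mapsto> (2, s^3). Suppose f is a diffeomorphism from the first structure to the second with inverse g,
   and let 0_i be the origin sent to 0_1 (so the other origin goes to 0_2). Reading f near the
   other origin in the cube chart gives a differentiable b with b 0 = 0, and reading g near 0_1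
   gives a differentiable c. Since the branches agree for t < 0, c (b t ^ 3) = t for t \<le> 0 near 0;
   but by the chain rule the left-hand side has derivative 3 b(0)^2 b'(0) c'(0) = 0 at 0, not 1. *)

section \<open>The topology of the simple branching\<close>

lemma istopology_quotient:
  "istopology (\<lambda>U. U \<subseteq> q ` topspace X \<and> openin X {x \<in> topspace X. q x \<in> U})"
proof -
  have "{x \<in> topspace X. q x \<in> S \<inter> T} = {x \<in> topspace X. q x \<in> S} \<inter> {x \<in> topspace X. q x \<in> T}"
    and "{x \<in> topspace X. q x \<in> \<Union>K} = (\<Union>S\<in>K. {x \<in> topspace X. q x \<in> S})" for S T K
    by blast+
  then show ?thesis unfolding istopology_def by auto
qed

lemma openin_quotient_topology:
  "openin (quotient_topology X q) U \<longleftrightarrow> U \<subseteq> q ` topspace X \<and> openin X {x \<in> topspace X. q x \<in> U}"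
  by (simp add: quotient_topology_def istopology_quotient)

definition branch_point :: "bool \<Rightarrow> real \<Rightarrow> (bool \<times> real) set" where
  "branch_point i t = branch_class (i, t)"

lemma branch_point_eq_iff:
  "branch_point i t = branch_point j s \<longleftrightarrow> t = s \<and> (i = j \<or> t < 0)"
proof
  assume "branch_point i t = branch_point j s"
  moreover have "(j, s) \<in> branch_point j s"
    by (simp add: branch_point_def branch_class_def branch_rel_def)
  ultimately have "(j, s) \<in> branch_point i t" by simp
  then show "t = s \<and> (i = j \<or> t < 0)"
    by (auto simp: branch_point_def branch_class_def branch_rel_def)
qed (auto simp: branch_point_def branch_class_def branch_rel_def)

lemma inj_branch_point: "inj (branch_point i)"
  by (auto simp: inj_def branch_point_eq_iff)

lemma range_branch_class: "range branch_class = range (branch_point True) \<union> range (branch_point False)"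
  by (auto simp: branch_point_def image_iff) (metis (full_types) prod.collapse)

lemma openin_simple_branching:
  "openin simple_branching U \<longleftrightarrow>
     U \<subseteq> range branch_class \<and> open {t. branch_point True t \<in> U} \<and> open {t. branch_point False t \<in> U}"
  by (simp add: simple_branching_def openin_quotient_topology two_lines_def openin_sum_topology
      all_bool_eq branch_point_def)

lemma topspace_simple_branching:
  "topspace simple_branching = range (branch_point True) \<union> range (branch_point False)"
proof -
  have "openin simple_branching (range branch_class)"
    by (simp add: openin_simple_branching branch_point_def)
  then have "range branch_class \<subseteq> topspace simple_branching"
    by (rule openin_subset)
  moreover have "topspace simple_branching \<subseteq> range branch_class"
    using openin_simple_branching[of "topspace simple_branching"] by simp
  ultimately show ?thesis by (auto simp: range_branch_class)
qed

lemma branch_point_in_topspace [simp]: "branch_point i t \<in> topspace simple_branching"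
  by (cases i) (auto simp: topspace_simple_branching)

lemma openin_branch_point_image:
  assumes "open B"
  shows "openin simple_branching (branch_point i ` B)"
proof -
  have "{t. branch_point j t \<in> branch_point i ` B} = B \<inter> (if i = j then UNIV else {..<0})" for j
    by (auto simp: branch_point_eq_iff)
  moreover have "branch_point i ` B \<subseteq> range branch_class"
    by (auto simp: branch_point_def)
  ultimately show ?thesis
    using assms by (simp add: openin_simple_branching open_Int)
qed

lemma continuous_map_branch_point: "continuous_map euclideanreal simple_branching (branch_point i)"
  by (cases i) (auto simp: continuous_map_def openin_simple_branching)

lemma homeomorphic_map_branch_point:
  "homeomorphic_map euclideanreal (subtopology simple_branching (range (branch_point i))) (branch_point i)"
proof (rule bijective_open_imp_homeomorphic_map)
  show "continuous_map euclideanreal (subtopology simple_branching (range (branch_point i))) (branch_point i)"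
    using continuous_map_branch_point by (simp add: continuous_map_in_subtopology)
  show "open_map euclideanreal (subtopology simple_branching (range (branch_point i))) (branch_point i)"
    by (auto simp: open_map_def openin_open_subtopology openin_branch_point_image)
qed (auto simp: inj_branch_point)

section \<open>Smooth real functions\<close>

lemma higher_deriv_cong_open:
  assumes "open S" "\<And>y. y \<in> S \<Longrightarrow> F y = G y" "x \<in> S"
  shows "\<forall>\<^sub>F y in nhds x. (deriv ^^ k) F y = (deriv ^^ k) G y"
proof -
  have "(deriv ^^ k) F y = (deriv ^^ k) G y" if "y \<in> S" for y
    using assms(1,2) that by (intro higher_deriv_cong_ev eventually_nhds_in_open[of S, THEN eventually_mono]) auto
  then show ?thesis
    using assms(1,3) by (auto elim!: eventually_mono[OF eventually_nhds_in_open])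
qed

lemma field_differentiable_cong_ev:
  "\<forall>\<^sub>F y in nhds x. f y = g y \<Longrightarrow> f field_differentiable at x \<longleftrightarrow> g field_differentiable at x"
  unfolding field_differentiable_def using DERIV_cong_ev by blast

lemma smooth_on_cong:
  assumes "open S" "\<And>x. x \<in> S \<Longrightarrow> F x = G x" "smooth_on S G"
  shows "smooth_on S F"
  unfolding smooth_on_def
proof (intro allI ballI)
  fix k x assume "x \<in> S"
  then show "(deriv ^^ k) F field_differentiable at x"
    using assms field_differentiable_cong_ev[OF higher_deriv_cong_open]
    unfolding smooth_on_def by blast
qed

lemma smooth_on_subset: "smooth_on S F \<Longrightarrow> T \<subseteq> S \<Longrightarrow> smooth_on T F"
  unfolding smooth_on_def by blast

lemma smooth_on_closed_under_deriv:
  assumes "open S"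
    and deriv_closed: "\<And>F. P F \<Longrightarrow> \<exists>F'. P F' \<and> (\<forall>x\<in>S. (F has_field_derivative F' x) (at x))"
    and "P F"
  shows "smooth_on S F"
proof -
  have "\<forall>F. P F \<longrightarrow> (\<forall>x\<in>S. (deriv ^^ k) F field_differentiable at x)" for k
  proof (induction k)
    case 0
    show ?case using deriv_closed by (auto simp: field_differentiable_def)
  next
    case (Suc k)
    show ?case
    proof (intro allI impI ballI)
      fix F x assume "P F" "x \<in> S"
      then obtain F' where F': "P F'" "\<And>y. y \<in> S \<Longrightarrow> (F has_field_derivative F' y) (at y)"
        using deriv_closed by blast
      then have "\<And>y. y \<in> S \<Longrightarrow> deriv F y = F' y" by (simp add: DERIV_imp_deriv)
      then have "\<forall>\<^sub>F y in nhds x. (deriv ^^ k) (deriv F) y = (deriv ^^ k) F' y"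
        using higher_deriv_cong_open[OF \<open>open S\<close> _ \<open>x \<in> S\<close>] by blast
      moreover have "(deriv ^^ k) F' field_differentiable at x" using Suc F'(1) \<open>x \<in> S\<close> by blast
      ultimately show "(deriv ^^ Suc k) F field_differentiable at x"
        by (simp only: funpow_Suc_right comp_def field_differentiable_cong_ev)
    qed
  qed
  then show ?thesis unfolding smooth_on_def using \<open>P F\<close> by blast
qed

lemma smooth_on_ident: "smooth_on S (\<lambda>x. x)"
proof -
  have "smooth_on UNIV (\<lambda>x. x)"
    by (rule smooth_on_closed_under_deriv[where P = "\<lambda>F. F = (\<lambda>x. x) \<or> (\<exists>c. F = (\<lambda>_. c))"])
      (auto intro!: derivative_eq_intros)
  then show ?thesis by (rule smooth_on_subset) simp
qed

lemma smooth_on_powr_neg: "smooth_on {..<0} (\<lambda>x::real. c * (-x) powr a)"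
proof (rule smooth_on_closed_under_deriv[where P = "\<lambda>F. \<exists>a c. F = (\<lambda>x. c * (-x) powr a)"])
  fix F :: "real \<Rightarrow> real" assume "\<exists>a c. F = (\<lambda>x. c * (-x) powr a)"
  then obtain a c where F: "F = (\<lambda>x. c * (-x) powr a)" by blast
  have "((\<lambda>x. c * (-x) powr a) has_field_derivative (- c * a) * (-x) powr (a - 1)) (at x)"
    if "x < 0" for x
    using that by (auto intro!: derivative_eq_intros)
  then show "\<exists>F'. (\<exists>a c. F' = (\<lambda>x. c * (-x) powr a)) \<and> (\<forall>x\<in>{..<0}. (F has_field_derivative F' x) (at x))"
    unfolding F by blast
qed auto

section \<open>Two smooth atlases\<close>

definition cube_chart :: "real \<Rightarrow> (bool \<times> real) set" where
  "cube_chart s = branch_point False (s ^ 3)"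

definition standard_atlas :: "(real \<Rightarrow> (bool \<times> real) set) set" where
  "standard_atlas = {branch_point True, branch_point False}"

definition cube_atlas :: "(real \<Rightarrow> (bool \<times> real) set) set" where
  "cube_atlas = {branch_point True, cube_chart}"

lemma homeomorphic_map_cube: "homeomorphic_map euclideanreal euclideanreal (\<lambda>s::real. s ^ 3)"
proof -
  have "homeomorphic_maps euclideanreal euclideanreal (\<lambda>s::real. s ^ 3) (root 3)"
    by (auto simp: homeomorphic_maps_def odd_real_root_power_cancel odd_real_root_pow
        intro!: continuous_intros)
  then show ?thesis by (auto simp: homeomorphic_map_maps)
qed

lemma cube_chart_eq_comp: "cube_chart = branch_point False \<circ> (\<lambda>s. s ^ 3)"
  by (auto simp: cube_chart_def)

lemma range_cube_chart: "range cube_chart = range (branch_point False)"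
proof -
  have "range cube_chart = branch_point False ` range (\<lambda>s::real. s ^ 3)"
    by (simp add: cube_chart_eq_comp image_comp)
  then show ?thesis
    using homeomorphic_imp_surjective_map[OF homeomorphic_map_cube] by simp
qed

lemma inj_cube_chart: "inj cube_chart"
  using homeomorphic_imp_injective_map[OF homeomorphic_map_cube]
  by (simp add: cube_chart_eq_comp inj_compose inj_branch_point)

lemma homeomorphic_map_cube_chart:
  "homeomorphic_map euclideanreal (subtopology simple_branching (range cube_chart)) cube_chart"
  unfolding range_cube_chart unfolding cube_chart_eq_comp
  by (rule homeomorphic_map_compose[OF homeomorphic_map_cube homeomorphic_map_branch_point])

lemma smooth_transition_branch_point:
  "smooth_on (branch_point i -` range (branch_point j)) (\<lambda>x. inv (branch_point j) (branch_point i x))"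
proof -
  have S: "branch_point i -` range (branch_point j) = (if i = j then UNIV else {..<0})"
    by (auto simp: branch_point_eq_iff)
  have op: "open (branch_point i -` range (branch_point j))"
    unfolding S by simp
  have eq: "inv (branch_point j) (branch_point i x) = x" if "x \<in> branch_point i -` range (branch_point j)" for x
  proof -
    have "branch_point i x = branch_point j x"
      using that by (auto simp: branch_point_eq_iff)
    then show ?thesis using inj_branch_point by (metis inv_f_f)
  qed
  show ?thesis
    using smooth_on_cong[OF op eq smooth_on_ident] .
qed

lemma smooth_transition_cube_root:
  "smooth_on (branch_point True -` range cube_chart) (\<lambda>x. inv cube_chart (branch_point True x))"
proof -
  have S: "branch_point True -` range cube_chart = {..<0}"
    by (auto simp: range_cube_chart branch_point_eq_iff)
  have "inv cube_chart (branch_point True x) = -1 * (-x) powr (1/3)" if "x < 0" for x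
  proof -
    have "branch_point True x = cube_chart (root 3 x)"
      using that by (simp add: cube_chart_def odd_real_root_pow branch_point_eq_iff)
    then have "inv cube_chart (branch_point True x) = root 3 x"
      using inj_cube_chart by simp
    also have "\<dots> = - root 3 (-x)"
      by (simp add: real_root_minus)
    also have "\<dots> = -1 * (-x) powr (1/3)"
      using that by (simp add: root_powr_inverse)
    finally show ?thesis .
  qed
  then show ?thesis unfolding S by (intro smooth_on_cong[OF _ _ smooth_on_powr_neg[of "-1" "1/3"]]) auto
qed

lemma smooth_transition_cube:
  "smooth_on (cube_chart -` range (branch_point True)) (\<lambda>s. inv (branch_point True) (cube_chart s))"
proof -
  have S: "cube_chart -` range (branch_point True) = {..<0}"
    by (auto simp: cube_chart_def branch_point_eq_iff)
  have "inv (branch_point True) (cube_chart s) = -1 * (-s) powr 3" if "s < 0" for s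
  proof -
    have "cube_chart s = branch_point True (s ^ 3)"
      using that by (simp add: cube_chart_def branch_point_eq_iff)
    then show ?thesis using that inj_branch_point by (simp add: powr_numeral)
  qed
  then show ?thesis unfolding S by (intro smooth_on_cong[OF _ _ smooth_on_powr_neg[of "-1" 3]]) auto
qed

lemma smooth_atlas_standard: "smooth_atlas simple_branching standard_atlas"
  unfolding smooth_atlas_def standard_atlas_def
proof (intro conjI)
  show "\<forall>h\<in>{branch_point True, branch_point False}. openin simple_branching (range h) \<and>
      homeomorphic_map euclideanreal (subtopology simple_branching (range h)) h"
    using homeomorphic_map_branch_point openin_branch_point_image[of UNIV] by simp
  show "\<forall>h\<in>{branch_point True, branch_point False}. \<forall>k\<in>{branch_point True, branch_point False}.
      smooth_on (h -` range k) (\<lambda>x. inv k (h x))"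
    using smooth_transition_branch_point by simp
qed (simp add: topspace_simple_branching)

lemma smooth_atlas_cube: "smooth_atlas simple_branching cube_atlas"
  unfolding smooth_atlas_def cube_atlas_def
proof (intro conjI)
  show "\<forall>h\<in>{branch_point True, cube_chart}. openin simple_branching (range h) \<and>
      homeomorphic_map euclideanreal (subtopology simple_branching (range h)) h"
    using homeomorphic_map_branch_point homeomorphic_map_cube_chart openin_branch_point_image[of UNIV]
    by (simp add: range_cube_chart)
  show "\<forall>h\<in>{branch_point True, cube_chart}. \<forall>k\<in>{branch_point True, cube_chart}.
      smooth_on (h -` range k) (\<lambda>x. inv k (h x))"
    using smooth_transition_branch_point smooth_transition_cube_root smooth_transition_cube
    by (simp add: inj_cube_chart smooth_on_ident)
qed (simp add: topspace_simple_branching range_cube_chart)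

section \<open>The non-separated origins\<close>

definition T2_separated :: "'a topology \<Rightarrow> 'a \<Rightarrow> 'a \<Rightarrow> bool" where
  "T2_separated X x y \<longleftrightarrow>
     (\<exists>U V. openin X U \<and> openin X V \<and> x \<in> U \<and> y \<in> V \<and> disjnt U V)"

lemma T2_separated_continuous_map_preimage:
  assumes "continuous_map X Y f" "x \<in> topspace X" "y \<in> topspace X" "T2_separated Y (f x) (f y)"
  shows "T2_separated X x y"
proof -
  obtain U V where "openin Y U" "openin Y V" "f x \<in> U" "f y \<in> V" "disjnt U V"
    using assms(4) by (auto simp: T2_separated_def)
  then show ?thesis
    unfolding T2_separated_def using assms(1-3)
    by (intro exI[of _ "{x \<in> topspace X. f x \<in> U}"] exI[of _ "{x \<in> topspace X. f x \<in> V}"])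
      (auto simp: openin_continuous_map_preimage disjnt_iff)
qed

lemma not_T2_separated_origins:
  "\<not> T2_separated simple_branching (branch_point True 0) (branch_point False 0)"
proof
  assume "T2_separated simple_branching (branch_point True 0) (branch_point False 0)"
  then obtain U V where UV: "openin simple_branching U" "openin simple_branching V"
    "branch_point True 0 \<in> U" "branch_point False 0 \<in> V" "disjnt U V"
    by (auto simp: T2_separated_def)
  then have "open ({t. branch_point True t \<in> U} \<inter> {t. branch_point False t \<in> V})"
    by (auto simp: openin_simple_branching)
  moreover have "0 \<in> {t. branch_point True t \<in> U} \<inter> {t. branch_point False t \<in> V}"
    using UV by simp
  ultimately obtain e where "e > 0" "ball 0 e \<subseteq> {t. branch_point True t \<in> U} \<inter> {t. branch_point False t \<in> V}"
    by (meson open_contains_ball)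
  then have "branch_point True (- e/2) \<in> U" "branch_point False (- e/2) \<in> V"
    by (auto simp: subset_iff dist_real_def)
  moreover have "branch_point True (- e/2) = branch_point False (- e/2)"
    using \<open>e > 0\<close> by (simp add: branch_point_eq_iff)
  ultimately show False
    using \<open>disjnt U V\<close> by (auto simp: disjnt_iff)
qed

lemma T2_separated_simple_branching:
  assumes "x \<in> topspace simple_branching" "y \<in> topspace simple_branching" "x \<noteq> y"
    and "{x, y} \<noteq> {branch_point True 0, branch_point False 0}"
  shows "T2_separated simple_branching x y"
proof -
  obtain i t j s where xy: "x = branch_point i t" "y = branch_point j s"
    using assms(1,2) by (auto simp: topspace_simple_branching)
  show ?thesis
  proof (cases "t = s")
    case False
    define e where "e = dist t s / 2"
    let ?nbhd = "\<lambda>r. branch_point True ` ball r e \<union> branch_point False ` ball r e"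
    have "disjnt (ball t e) (ball s e)"
      unfolding disjnt_def by (rule disjoint_ballI) (simp add: e_def)
    then have "disjnt (?nbhd t) (?nbhd s)"
      by (auto simp: disjnt_iff branch_point_eq_iff)
    moreover have "x \<in> ?nbhd t" "y \<in> ?nbhd s"
      using False unfolding xy e_def by (cases i; cases j; simp)+
    ultimately show ?thesis
      unfolding T2_separated_def by (meson openin_Un openin_branch_point_image open_ball)
  next
    case True
    then have "i \<noteq> j" "t \<ge> 0" using assms(3) xy by (auto simp: branch_point_eq_iff)
    moreover have "t \<noteq> 0"
      using assms(4) xy True \<open>i \<noteq> j\<close> by (cases i; cases j) auto
    ultimately have "x \<in> branch_point i ` {0<..}" "y \<in> branch_point j ` {0<..}"
      "disjnt (branch_point i ` {0<..}) (branch_point j ` {0<..})"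
      using True xy by (auto simp: disjnt_iff branch_point_eq_iff)
    then show ?thesis
      unfolding T2_separated_def by (meson openin_branch_point_image open_greaterThan)
  qed
qed

lemma homeomorphic_maps_permute_origins:
  assumes "homeomorphic_maps simple_branching simple_branching f g"
  obtains i where "f (branch_point i 0) = branch_point True 0" "f (branch_point (\<not> i) 0) = branch_point False 0"
proof -
  let ?p = "branch_point True 0" and ?q = "branch_point False 0"
  have cont: "continuous_map simple_branching simple_branching f"
    and gf: "\<And>x. x \<in> topspace simple_branching \<Longrightarrow> g (f x) = x"
    using assms unfolding homeomorphic_maps_def by blast+
  have "?p \<noteq> ?q" by (simp add: branch_point_eq_iff)
  then have "f ?p \<noteq> f ?q"
    using gf by (metis branch_point_in_topspace)
  moreover have "\<not> T2_separated simple_branching (f ?p) (f ?q)"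
    using T2_separated_continuous_map_preimage[OF cont, of ?p ?q] not_T2_separated_origins by auto
  moreover have "f ?p \<in> topspace simple_branching" "f ?q \<in> topspace simple_branching"
    using cont by (simp_all add: continuous_map_def Pi_iff)
  ultimately have "{f ?p, f ?q} = {?p, ?q}"
    using T2_separated_simple_branching[of "f ?p" "f ?q"] by blast
  then consider "f ?p = ?p" "f ?q = ?q" | "f ?p = ?q" "f ?q = ?p"
    using \<open>f ?p \<noteq> f ?q\<close> by (auto simp: doubleton_eq_iff)
  then show ?thesis
    using that[of True] that[of False] by cases simp_all
qed

section \<open>No diffeomorphism between the two structures\<close>

lemma eventually_in_openin_continuous_map:
  assumes "continuous_map euclideanreal X h" "openin X U" "h x \<in> U"
  shows "\<forall>\<^sub>F t in nhds x. h t \<in> U"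
proof -
  have "open {t. h t \<in> U}"
    using openin_continuous_map_preimage[OF assms(1,2)] by simp
  then show ?thesis
    using eventually_nhds_in_open[of "{t. h t \<in> U}" x] assms(3) by simp
qed

lemma smooth_map_atlas_field_differentiable:
  assumes "smooth_map_atlas A B f" "h \<in> A" "k \<in> B" "f (h x) \<in> range k"
  shows "(\<lambda>x. inv k (f (h x))) field_differentiable at x"
  using assms unfolding smooth_map_atlas_def smooth_on_def by (metis funpow_0 vimageI)

lemma no_differentiable_factorization_through_cube:
  fixes b c :: "real \<Rightarrow> real"
  assumes "b field_differentiable at 0" "c field_differentiable at 0" "b 0 = 0"
    and "\<forall>\<^sub>F t in nhds 0. t \<le> 0 \<longrightarrow> c (b t ^ 3) = t"
  shows False
proof -
  obtain B C where B: "(b has_field_derivative B) (at 0)" and C: "(c has_field_derivative C) (at 0)"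
    using assms(1,2) by (auto simp: field_differentiable_def)
  have "at_left (0::real) \<le> at 0 within {..0}"
    by (rule at_le) auto
  then have nontrivial: "at (0::real) within {..0} \<noteq> bot"
    using trivial_limit_at_left_real[of 0] by (metis bot_unique)
  have ev: "\<forall>\<^sub>F t in nhds 0. t \<in> {..0} \<longrightarrow> c (b t ^ 3) = t"
    using assms(4) by simp
  have "((\<lambda>t. b t ^ 3) has_field_derivative 0) (at 0)"
    using DERIV_power[OF B, of 3] assms(3) by simp
  moreover have "(c has_field_derivative C) (at (b 0 ^ 3))"
    using C assms(3) by simp
  ultimately have "((\<lambda>t. c (b t ^ 3)) has_field_derivative 0) (at 0 within {..0})"
    using DERIV_chain2 has_field_derivative_at_within by fastforce
  then have "((\<lambda>t::real. t) has_field_derivative 0) (at 0 within {..0})"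
    using has_field_derivative_cong_ev[OF refl ev refl refl] by simp
  moreover have "((\<lambda>t::real. t) has_field_derivative 1) (at 0 within {..0})"
    by (rule DERIV_ident)
  ultimately show False
    using vector_derivative_unique_within[OF nontrivial]
    by (metis has_real_derivative_iff_has_vector_derivative zero_neq_one)
qed

lemma homeomorphism_in_charts_near_origins:
  assumes hom: "homeomorphic_maps simple_branching simple_branching f g"
    and origins: "f (branch_point i 0) = branch_point True 0" "f (branch_point (\<not> i) 0) = branch_point False 0"
  shows "\<forall>\<^sub>F t in nhds 0. t \<le> 0 \<longrightarrow>
    inv (branch_point i) (g (branch_point True ((inv cube_chart (f (branch_point (\<not> i) t))) ^ 3))) = t"
proof -
  have cont: "continuous_map simple_branching simple_branching f"
    and gf: "\<And>x. x \<in> topspace simple_branching \<Longrightarrow> g (f x) = x"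
    using hom unfolding homeomorphic_maps_def by blast+
  have "\<forall>\<^sub>F t in nhds 0. f (branch_point i t) \<in> range (branch_point True)"
    "\<forall>\<^sub>F t in nhds 0. f (branch_point (\<not> i) t) \<in> range cube_chart"
    using origins openin_branch_point_image[of UNIV]
    by (auto intro!: eventually_in_openin_continuous_map
        continuous_map_compose[OF continuous_map_branch_point cont, unfolded o_def] simp: range_cube_chart)
  then show ?thesis
  proof eventually_elim
    case (elim t)
    then obtain r s where r: "f (branch_point i t) = branch_point True r"
      and s: "f (branch_point (\<not> i) t) = cube_chart s"
      by blast
    show ?case
    proof
      assume "t \<le> 0"
      have "r = s ^ 3"
      proof (cases "t = 0")
        case True
        then show ?thesis
          using origins r s by (simp add: cube_chart_def branch_point_eq_iff)
      next
        case False
        with \<open>t \<le> 0\<close> have "branch_point i t = branch_point (\<not> i) t"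
          by (simp add: branch_point_eq_iff)
        then have "branch_point True r = cube_chart s"
          using r s by simp
        then show ?thesis
          by (simp add: cube_chart_def branch_point_eq_iff)
      qed
      then show "inv (branch_point i) (g (branch_point True ((inv cube_chart (f (branch_point (\<not> i) t))) ^ 3))) = t"
        using r s gf inj_branch_point inj_cube_chart by (metis branch_point_in_topspace inv_f_f)
    qed
  qed
qed

lemma not_smooth_homeomorphism_standard_cube:
  assumes hom: "homeomorphic_maps simple_branching simple_branching f g"
    and f_smooth: "smooth_map_atlas standard_atlas cube_atlas f"
    and g_smooth: "smooth_map_atlas cube_atlas standard_atlas g"
    and origins: "f (branch_point i 0) = branch_point True 0" "f (branch_point (\<not> i) 0) = branch_point False 0"
  shows False
proof -
  define b where "b = (\<lambda>t. inv cube_chart (f (branch_point (\<not> i) t)))"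
  define c where "c = (\<lambda>s. inv (branch_point i) (g (branch_point True s)))"
  have f_origin: "f (branch_point (\<not> i) 0) = cube_chart 0"
    using origins(2) by (simp add: cube_chart_def)
  have g_origin: "g (branch_point True 0) = branch_point i 0"
    using hom origins(1) unfolding homeomorphic_maps_def by (metis branch_point_in_topspace)
  have "b field_differentiable at 0"
    using smooth_map_atlas_field_differentiable[OF f_smooth, of "branch_point (\<not> i)" cube_chart 0] f_origin
    by (cases i) (simp_all add: b_def standard_atlas_def cube_atlas_def)
  moreover have "c field_differentiable at 0"
    using smooth_map_atlas_field_differentiable[OF g_smooth, of "branch_point True" "branch_point i" 0] g_origin
    by (cases i) (simp_all add: c_def standard_atlas_def cube_atlas_def)
  moreover have "b 0 = 0"
    using f_origin inj_cube_chart by (simp add: b_def)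
  moreover have "\<forall>\<^sub>F t in nhds 0. t \<le> 0 \<longrightarrow> c (b t ^ 3) = t"
    using homeomorphism_in_charts_near_origins[OF hom origins] by (simp add: b_def c_def)
  ultimately show False
    by (rule no_differentiable_factorization_through_cube)
qed

lemma no_smooth_homeomorphism_standard_cube:
  assumes "homeomorphic_maps simple_branching simple_branching f g"
    and "smooth_map_atlas standard_atlas cube_atlas f" "smooth_map_atlas cube_atlas standard_atlas g"
  shows False
  using homeomorphic_maps_permute_origins[OF assms(1)] not_smooth_homeomorphism_standard_cube[OF assms]
  by metis

theorem mainTheorem4:
  shows "\<exists>A1 A2. smooth_atlas simple_branching A1 \<and> smooth_atlas simple_branching A2 \<and>
     \<not> (\<exists>f g. homeomorphic_maps simple_branching simple_branching f g \<and>
             smooth_map_atlas A1 A2 f \<and> smooth_map_atlas A2 A1 g)"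
  using smooth_atlas_standard smooth_atlas_cube no_smooth_homeomorphism_standard_cube by blast

end
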